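(* Let $\mathcal{S}=[-\pi,\pi]$ with periodic identification of the endpoints. Let $\rho^{\mathrm d}:\mathcal{S}\times\mathbb{R}_{\ge0}\to\mathbb{R}_{\ge0}$ be smooth and periodic in $x$ with $\|\rho^{\mathrm d}(\cdot,t)\|_2\le M$ and $\|\rho^{\mathrm d}_x(\cdot,t)\|_2\le L$ for all $t\ge0$. Let $d:\mathcal{S}\times\mathbb{R}_{\ge0}\to\mathbb{R}$ satisfy $d(-\pi,t)=d(\pi,t)$ and $\|d(\cdot,t)\|_\infty\le D_1$, $\|d_x(\cdot,t)\|_\infty\le D_2$ for all $t\ge0$, with constants $D_1,D_2>0$. Let $K_{\mathrm p}>0$ and let $e$ be an $x$-periodic solution of $$e_t(x,t)=-K_{\mathrm p}e(x,t)+\big[(\rho^{\mathrm d}(x,t)-e(x,t))\,d(x,t)\big]_x.$$ Then for every $\kappa$ with $D_2<\kappa<+\infty$, if $2K_{\mathrm p}>\kappa$, the squared error norm $\|e(\cdot,t)\|_2^2$ remains bounded and $$\limsup_{t\to\infty}\|e(\cdot,t)\|_2\le\frac{2LD_1+2MD_2}{\kappa-D_2}.$$ In particular, the upper bound on the steady-state error can be made arbitrarily small by choosing $\kappa$ sufficiently large.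
   Context: Norms: $\|h(\cdot,t)\|_p=(\int_{\mathcal{S}}|h(x,t)|^p\,dx)^{1/p}$, $\|h(\cdot,t)\|_\infty=\operatorname{ess\,sup}_{\mathcal{S}}|h(x,t)|$. Subscripts $t,x$ denote partial derivatives. Background: this error equation arises for $e=\rho^{\mathrm d}-\rho$ when a multiagent density $\rho$ on the ring obeys $\rho_t+[\rho((f*\rho)+d)]_x=q$ with a velocity perturbation $d$ and control $q=K_{\mathrm p}e-[e(f*\rho^{\mathrm d})]_x-[\rho(f*e)]_x$, while $\rho^{\mathrm d}_t+[\rho^{\mathrm d}(f*\rho^{\mathrm d})]_x=0$; here $*$ is circular convolution on $\mathcal{S}$ and $f$ a periodic interaction kernel. *)

theory Defs
  imports "HOL-Analysis.Analysis"
begin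

definition S :: "real set" where
  "S = {-pi..pi}"

definition L2norm :: "(real \<Rightarrow> real) \<Rightarrow> real" where
  "L2norm h = sqrt (integral S (\<lambda>x. (h x)\<^sup>2))"

end

theory Submission
  imports Defs
begin

text \<open>The squared norm \<open>y t = (L2norm (\<lambda>x. e x t))\<^sup>2\<close> has derivative \<open>2 \<integral> e e\<^sub>t\<close>.
  Substituting the error equation and integrating by parts over the ring (periodicity kills the
  boundary terms, and \<open>\<integral> e e\<^sub>x d = - \<integral> e\<^sup>2 d\<^sub>x / 2\<close>), Cauchy--Schwarz gives
  \<open>y' \<le> - (2 K\<^sub>p - D\<^sub>2) y + 2 (L D\<^sub>1 + M D\<^sub>2) sqrt y\<close>. Young's inequality absorbs the square root
  into half of the damping, and comparison with the resulting linear differential inequality gives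
  \<open>y t \<le> K + (y 0 - K) exp (- (2 K\<^sub>p - D\<^sub>2) t / 2)\<close> with
  \<open>sqrt K = 2 (L D\<^sub>1 + M D\<^sub>2) / (2 K\<^sub>p - D\<^sub>2)\<close>; finally \<open>2 K\<^sub>p - D\<^sub>2 > \<kappa> - D\<^sub>2\<close>.\<close>

lemma integral_power2_nonneg:
  fixes h :: "'a::euclidean_space \<Rightarrow> real"
  shows "0 \<le> integral T (\<lambda>x. (h x)\<^sup>2)"
  by (cases "(\<lambda>x. (h x)\<^sup>2) integrable_on T") (auto intro: integral_nonneg simp: not_integrable_integral)

lemma L2norm_nonneg: "0 \<le> L2norm h"
  by (simp add: L2norm_def integral_power2_nonneg)

lemma power2_L2norm: "(L2norm h)\<^sup>2 = integral S (\<lambda>x. (h x)\<^sup>2)"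
  by (simp add: L2norm_def integral_power2_nonneg)

lemma continuous_on_section:
  fixes f :: "'a::topological_space \<Rightarrow> 'b::topological_space \<Rightarrow> 'c::topological_space"
  assumes "continuous_on (A \<times> B) (\<lambda>(x, t). f x t)" and "t \<in> B"
  shows "continuous_on A (\<lambda>x. f x t)"
proof -
  have "continuous_on A (\<lambda>x. (x, t))" by (intro continuous_intros)
  then show ?thesis using continuous_on_compose2[OF assms(1)] assms(2) by fastforce
qed

lemma continuous_on_S_integrable: "continuous_on S (h :: real \<Rightarrow> real) \<Longrightarrow> h integrable_on S"
  unfolding S_def by (rule integrable_continuous_interval)

lemma square_le_of_quadratic_nonneg:
  fixes A B P :: real
  assumes "0 \<le> A" and "\<And>l. 0 \<le> A * l\<^sup>2 - 2 * P * l + B"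
  shows "P\<^sup>2 \<le> A * B"
proof (cases "A = 0")
  case True
  have "0 \<le> A * ((B + 1) / (2 * P))\<^sup>2 - 2 * P * ((B + 1) / (2 * P)) + B" by (rule assms(2))
  then have "P = 0" using True by (cases "P = 0") (auto simp: field_simps)
  then show ?thesis using True by simp
next
  case False
  have "0 \<le> A * (P / A)\<^sup>2 - 2 * P * (P / A) + B" by (rule assms(2))
  then show ?thesis using False assms(1) by (simp add: field_simps power2_eq_square)
qed

lemma mult_le_abs_mult_bound:
  fixes x y B :: "'a::linordered_idom"
  assumes "\<bar>y\<bar> \<le> B"
  shows "x * y \<le> \<bar>x\<bar> * B"
proof -
  have "x * y \<le> \<bar>x\<bar> * \<bar>y\<bar>" by (metis abs_ge_self abs_mult)
  also have "\<dots> \<le> \<bar>x\<bar> * B" by (rule mult_left_mono[OF assms]) simp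
  finally show ?thesis .
qed

lemma integral_abs_mult_le_sqrt_integral_square:
  fixes f g :: "'a::euclidean_space \<Rightarrow> real"
  assumes f2: "(\<lambda>x. (f x)\<^sup>2) integrable_on T" and g2: "(\<lambda>x. (g x)\<^sup>2) integrable_on T"
    and fg: "(\<lambda>x. \<bar>f x\<bar> * \<bar>g x\<bar>) integrable_on T"
  shows "integral T (\<lambda>x. \<bar>f x\<bar> * \<bar>g x\<bar>)
    \<le> sqrt (integral T (\<lambda>x. (f x)\<^sup>2)) * sqrt (integral T (\<lambda>x. (g x)\<^sup>2))"
proof -
  let ?A = "integral T (\<lambda>x. (f x)\<^sup>2)" and ?B = "integral T (\<lambda>x. (g x)\<^sup>2)"
    and ?P = "integral T (\<lambda>x. \<bar>f x\<bar> * \<bar>g x\<bar>)"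
  have "0 \<le> ?A * l\<^sup>2 - 2 * ?P * l + ?B" for l
  proof -
    have "((\<lambda>x. (l * \<bar>f x\<bar> - \<bar>g x\<bar>)\<^sup>2) has_integral ?A * l\<^sup>2 - 2 * ?P * l + ?B) T"
    proof -
      have "((\<lambda>x. (f x)\<^sup>2 * l\<^sup>2 - \<bar>f x\<bar> * \<bar>g x\<bar> * (2 * l) + (g x)\<^sup>2)
          has_integral ?A * l\<^sup>2 - ?P * (2 * l) + ?B) T"
        by (intro has_integral_add has_integral_diff has_integral_mult_left integrable_integral f2 g2 fg)
      then show ?thesis by (simp add: power2_eq_square algebra_simps)
    qed
    then show ?thesis by (rule has_integral_nonneg) simp
  qed
  then have "?P\<^sup>2 \<le> ?A * ?B"
    by (intro square_le_of_quadratic_nonneg integral_nonneg f2) auto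
  moreover have "0 \<le> ?P" by (intro integral_nonneg fg) auto
  ultimately show ?thesis by (metis real_le_rsqrt real_sqrt_mult)
qed

lemma integral_abs_mult_le_L2norm:
  assumes "continuous_on S f" and "continuous_on S g"
  shows "integral S (\<lambda>x. \<bar>f x\<bar> * \<bar>g x\<bar>) \<le> L2norm f * L2norm g"
  unfolding L2norm_def
  by (intro integral_abs_mult_le_sqrt_integral_square continuous_on_S_integrable continuous_intros assms)

lemma fundamental_theorem_of_calculus_periodic:
  fixes F f :: "real \<Rightarrow> real"
  assumes "a \<le> b" and "\<And>x. x \<in> {a..b} \<Longrightarrow> (F has_real_derivative f x) (at x within {a..b})"
    and "F a = F b"
  shows "(f has_integral 0) {a..b}"
  using fundamental_theorem_of_calculus[of a b F f] assms
  by (simp add: has_real_derivative_iff_has_vector_derivative)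

lemma has_real_derivative_unique_S:
  assumes "x \<in> S" and "(f has_real_derivative f') (at x within S)"
    and "(f has_real_derivative f'') (at x within S)"
  shows "f' = f''"
  using assms vector_derivative_unique_within_closed_interval[of "-pi" pi x f f' f'']
  by (auto simp: S_def has_real_derivative_iff_has_vector_derivative)

lemma error_energy_inequality:
  fixes e ex v r rx d dx :: "real \<Rightarrow> real" and k D1 D2 :: real
  assumes e_x: "\<And>x. x \<in> S \<Longrightarrow> (e has_real_derivative ex x) (at x within S)"
    and r_x: "\<And>x. x \<in> S \<Longrightarrow> (r has_real_derivative rx x) (at x within S)"
    and d_x: "\<And>x. x \<in> S \<Longrightarrow> (d has_real_derivative dx x) (at x within S)"
    and eqn: "\<And>x. x \<in> S \<Longrightarrow>
      ((\<lambda>y. (r y - e y) * d y) has_real_derivative v x + k * e x) (at x within S)"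
    and v_cont: "continuous_on S v" and rx_cont: "continuous_on S rx"
    and e_per: "e (-pi) = e pi" and d_per: "d (-pi) = d pi"
    and d_bound: "\<And>x. x \<in> S \<Longrightarrow> \<bar>d x\<bar> \<le> D1"
    and dx_bound: "\<And>x. x \<in> S \<Longrightarrow> \<bar>dx x\<bar> \<le> D2"
  shows "integral S (\<lambda>x. 2 * e x * v x)
    \<le> - (2 * k - D2) * (L2norm e)\<^sup>2 + 2 * (D1 * L2norm rx + D2 * L2norm r) * L2norm e"
proof -
  have e_cont: "continuous_on S e" and r_cont: "continuous_on S r"
    using e_x r_x by (metis DERIV_continuous continuous_on_eq_continuous_within)+
  have "0 \<in> S" by (simp add: S_def)
  then have "0 \<le> D1" "0 \<le> D2" using d_bound dx_bound by (meson abs_ge_zero order_trans)+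
  \<comment> \<open>Adding \<open>G = (e\<^sup>2 d)'\<close>, whose integral vanishes by periodicity, removes the term
    \<open>e e\<^sub>x d\<close>, which the hypotheses do not control; this is where \<open>D\<^sub>2 / 2\<close> comes from.\<close>
  define G where "G x = 2 * e x * ex x * d x + (e x)\<^sup>2 * dx x" for x
  have G_int: "(G has_integral 0) S"
    unfolding S_def
  proof (rule fundamental_theorem_of_calculus_periodic[where F = "\<lambda>x. (e x)\<^sup>2 * d x"])
    fix x assume "x \<in> {-pi..pi}"
    then have "x \<in> S" by (simp add: S_def)
    from DERIV_mult[OF DERIV_mult[OF e_x e_x] d_x, OF this this this]
    show "((\<lambda>x. (e x)\<^sup>2 * d x) has_real_derivative G x) (at x within {-pi..pi})"
      by (simp add: G_def S_def power2_eq_square algebra_simps)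
  qed (simp_all add: e_per d_per)
  have pointwise: "2 * e x * v x + G x
      \<le> - (2 * k - D2) * (e x)\<^sup>2 + 2 * D1 * (\<bar>e x\<bar> * \<bar>rx x\<bar>) + 2 * D2 * (\<bar>e x\<bar> * \<bar>r x\<bar>)"
    if x: "x \<in> S" for x
  proof -
    have "v x + k * e x = (rx x - ex x) * d x + dx x * (r x - e x)"
      using has_real_derivative_unique_S[OF x eqn[OF x] DERIV_mult[OF DERIV_diff[OF r_x e_x] d_x, OF x x x]] .
    then have v_eq: "v x = (rx x - ex x) * d x + dx x * (r x - e x) - k * e x" by linarith
    have "2 * e x * v x + G x
        = 2 * (e x * rx x * d x) + 2 * (e x * r x * dx x) + (- (e x)\<^sup>2) * dx x - 2 * k * (e x)\<^sup>2"
      unfolding v_eq G_def by (simp add: algebra_simps power2_eq_square)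
    moreover have "e x * rx x * d x \<le> \<bar>e x * rx x\<bar> * D1"
      and "e x * r x * dx x \<le> \<bar>e x * r x\<bar> * D2" and "(- (e x)\<^sup>2) * dx x \<le> \<bar>- (e x)\<^sup>2\<bar> * D2"
      using d_bound dx_bound x by (blast intro: mult_le_abs_mult_bound)+
    ultimately show ?thesis by (simp add: abs_mult algebra_simps)
  qed
  have "(\<lambda>x. 2 * e x * v x) integrable_on S"
    by (intro continuous_on_S_integrable continuous_intros e_cont v_cont)
  from has_integral_add[OF integrable_integral[OF this] G_int]
  have "((\<lambda>x. 2 * e x * v x + G x) has_integral integral S (\<lambda>x. 2 * e x * v x)) S" by simp
  then have "integral S (\<lambda>x. 2 * e x * v x)
      \<le> integral S (\<lambda>x. - (2 * k - D2) * (e x)\<^sup>2 + 2 * D1 * (\<bar>e x\<bar> * \<bar>rx x\<bar>)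
        + 2 * D2 * (\<bar>e x\<bar> * \<bar>r x\<bar>))"
    by (rule has_integral_le[OF _ integrable_integral])
      (intro continuous_on_S_integrable continuous_intros e_cont r_cont rx_cont, erule pointwise)
  also have "\<dots> = - (2 * k - D2) * (L2norm e)\<^sup>2 + 2 * D1 * integral S (\<lambda>x. \<bar>e x\<bar> * \<bar>rx x\<bar>)
      + 2 * D2 * integral S (\<lambda>x. \<bar>e x\<bar> * \<bar>r x\<bar>)"
    by (simp add: power2_L2norm integral_add continuous_on_S_integrable continuous_intros e_cont r_cont rx_cont)
  also have "\<dots> \<le> - (2 * k - D2) * (L2norm e)\<^sup>2 + 2 * (D1 * L2norm rx + D2 * L2norm r) * L2norm e"
    using mult_left_mono[OF integral_abs_mult_le_L2norm[OF e_cont rx_cont], of "2 * D1"]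
      mult_left_mono[OF integral_abs_mult_le_L2norm[OF e_cont r_cont], of "2 * D2"] \<open>0 \<le> D1\<close> \<open>0 \<le> D2\<close>
    by (simp add: algebra_simps)
  finally show ?thesis .
qed

lemma has_real_derivative_integral_power2:
  fixes u ut :: "real \<Rightarrow> real \<Rightarrow> real"
  assumes u_t: "\<And>x s. x \<in> {a..b} \<Longrightarrow> s \<in> T \<Longrightarrow> ((\<lambda>s. u x s) has_real_derivative ut x s) (at s within T)"
    and u_cont: "continuous_on ({a..b} \<times> T) (\<lambda>(x, s). u x s)"
    and ut_cont: "continuous_on ({a..b} \<times> T) (\<lambda>(x, s). ut x s)"
    and "convex T" and "t \<in> T"
  shows "((\<lambda>s. integral {a..b} (\<lambda>x. (u x s)\<^sup>2)) has_real_derivative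
    integral {a..b} (\<lambda>x. 2 * u x t * ut x t)) (at t within T)"
proof -
  have "((\<lambda>s. integral (cbox a b) (\<lambda>x. (u x s)\<^sup>2)) has_real_derivative
      integral (cbox a b) (\<lambda>x. 2 * u x t * ut x t)) (at t within T)"
  proof (rule leibniz_rule_field_derivative[where fx = "\<lambda>s x. 2 * u x s * ut x s"])
    fix s x assume "s \<in> T" and "x \<in> cbox a b"
    with u_t show "((\<lambda>s. (u x s)\<^sup>2) has_real_derivative 2 * u x s * ut x s) (at s within T)"
      by (auto intro!: derivative_eq_intros)
  next
    fix s assume "s \<in> T"
    have "continuous_on {a..b} (\<lambda>x. (u x s)\<^sup>2)"
      using continuous_on_section[OF u_cont \<open>s \<in> T\<close>] by (intro continuous_intros)
    then show "(\<lambda>x. (u x s)\<^sup>2) integrable_on cbox a b"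
      by (simp add: integrable_continuous_interval)
  next
    have "continuous_on (T \<times> {a..b}) (\<lambda>(s, x). 2 * u x s * ut x s)"
      using continuous_on_swap_args[OF u_cont] continuous_on_swap_args[OF ut_cont]
      by (auto simp: split_beta intro!: continuous_intros)
    then show "continuous_on (T \<times> cbox a b) (\<lambda>(s, x). 2 * u x s * ut x s)" by simp
  qed (use assms in auto)
  then show ?thesis by simp
qed

lemma has_real_derivative_nonpos_imp_nonincreasing:
  fixes g g' :: "real \<Rightarrow> real"
  assumes "a \<le> b"
    and "\<And>x. x \<in> {a..b} \<Longrightarrow> (g has_real_derivative g' x) (at x within {a..b})"
    and "\<And>x. x \<in> {a..b} \<Longrightarrow> g' x \<le> 0"
  shows "g b \<le> g a"
proof -
  have "\<exists>x\<in>{a..b}. g b - g a = g' x * (b - a)"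
    by (rule mvt_very_simple[OF \<open>a \<le> b\<close>]) (use assms(2) in \<open>auto simp: has_field_derivative_def\<close>)
  then obtain x where "x \<in> {a..b}" and "g b - g a = g' x * (b - a)" ..
  with assms(1,3) show ?thesis by (smt (verit) mult_nonpos_nonneg)
qed

lemma linear_differential_inequality_exp_bound:
  fixes y y' :: "real \<Rightarrow> real" and a b t :: real
  assumes "a \<noteq> 0"
    and y_deriv: "\<And>s. 0 \<le> s \<Longrightarrow> (y has_real_derivative y' s) (at s within {0..})"
    and y'_le: "\<And>s. 0 \<le> s \<Longrightarrow> y' s \<le> b - a * y s"
    and "0 \<le> t"
  shows "y t \<le> b / a + (y 0 - b / a) * exp (- a * t)"
proof -
  define g where "g s = (y s - b / a) * exp (a * s)" for s
  have "g t \<le> g 0"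
  proof (rule has_real_derivative_nonpos_imp_nonincreasing[OF \<open>0 \<le> t\<close>])
    fix s assume s: "s \<in> {0..t}"
    have "(g has_real_derivative (y' s + a * y s - b) * exp (a * s)) (at s within {0..})"
      unfolding g_def using y_deriv[of s] s \<open>a \<noteq> 0\<close>
      by (auto intro!: derivative_eq_intros simp: field_simps)
    then show "(g has_real_derivative (y' s + a * y s - b) * exp (a * s)) (at s within {0..t})"
      by (rule DERIV_subset) auto
    show "(y' s + a * y s - b) * exp (a * s) \<le> 0"
      using y'_le[of s] s by (simp add: mult_nonpos_nonneg)
  qed
  then have "(y t - b / a) * exp (a * t) * exp (- a * t) \<le> (y 0 - b / a) * exp (- a * t)"
    by (simp add: g_def)
  then show ?thesis by (simp add: mult.assoc flip: exp_add)
qed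

lemma sqrt_forced_differential_inequality_exp_bound:
  fixes y y' :: "real \<Rightarrow> real" and a c t :: real
  assumes "0 < a"
    and y_deriv: "\<And>s. 0 \<le> s \<Longrightarrow> (y has_real_derivative y' s) (at s within {0..})"
    and y'_le: "\<And>s. 0 \<le> s \<Longrightarrow> y' s \<le> - a * y s + 2 * c * sqrt (y s)"
    and y_nonneg: "\<And>s. 0 \<le> s \<Longrightarrow> 0 \<le> y s"
    and "0 \<le> t"
  shows "y t \<le> (2 * c / a)\<^sup>2 + (y 0 - (2 * c / a)\<^sup>2) * exp (- (a / 2) * t)"
proof -
  have "y' s \<le> 2 * c\<^sup>2 / a - a / 2 * y s" if "0 \<le> s" for s
  proof -
    have "0 \<le> a / 2 * (sqrt (y s) - 2 * c / a)\<^sup>2" using \<open>0 < a\<close> by simp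
    also have "\<dots> = a / 2 * y s + 2 * c\<^sup>2 / a - 2 * c * sqrt (y s)"
      using \<open>0 < a\<close> y_nonneg[OF that] by (simp add: field_simps power2_eq_square)
    finally show ?thesis using y'_le[OF that] by simp
  qed
  moreover have "2 * c\<^sup>2 / a / (a / 2) = (2 * c / a)\<^sup>2"
    using \<open>0 < a\<close> by (simp add: field_simps power2_eq_square)
  ultimately show ?thesis
    using linear_differential_inequality_exp_bound[of "a / 2" y y' "2 * c\<^sup>2 / a"] y_deriv \<open>0 < a\<close> \<open>0 \<le> t\<close>
    by simp
qed

lemma Limsup_sqrt_le_of_exp_decay_bound:
  fixes y :: "real \<Rightarrow> real" and a K C :: real
  assumes "0 < a" and "\<And>t. 0 \<le> t \<Longrightarrow> y t \<le> K + C * exp (- a * t)"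
  shows "Limsup at_top (\<lambda>t. ereal (sqrt (y t))) \<le> ereal (sqrt K)"
proof -
  have "((\<lambda>t. exp (- a * t)) \<longlongrightarrow> 0) at_top"
    using filterlim_compose[OF exp_at_bot filterlim_tendsto_neg_mult_at_bot[OF tendsto_const[of "- a"] _ filterlim_ident]]
      \<open>0 < a\<close> by simp
  then have "((\<lambda>t. ereal (sqrt (K + C * exp (- a * t)))) \<longlongrightarrow> ereal (sqrt (K + C * 0))) at_top"
    by (intro tendsto_intros)
  have "Limsup at_top (\<lambda>t. ereal (sqrt (y t))) \<le> Limsup at_top (\<lambda>t. ereal (sqrt (K + C * exp (- a * t))))"
    using assms(2) by (intro Limsup_mono eventually_mono[OF eventually_ge_at_top[of 0]]) auto
  also have "\<dots> = ereal (sqrt K)"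
    using \<open>(_ \<longlongrightarrow> ereal (sqrt (K + C * 0))) at_top\<close> by (simp add: lim_imp_Limsup)
  finally show ?thesis .
qed

lemma sqrt_forced_differential_inequality_bounded_Limsup:
  fixes y y' :: "real \<Rightarrow> real" and a c :: real
  assumes "0 < a" and "0 \<le> c"
    and y_deriv: "\<And>s. 0 \<le> s \<Longrightarrow> (y has_real_derivative y' s) (at s within {0..})"
    and y'_le: "\<And>s. 0 \<le> s \<Longrightarrow> y' s \<le> - a * y s + 2 * c * sqrt (y s)"
    and y_nonneg: "\<And>s. 0 \<le> s \<Longrightarrow> 0 \<le> y s"
  shows "(\<exists>B. \<forall>t\<ge>0. y t \<le> B) \<and> Limsup at_top (\<lambda>t. ereal (sqrt (y t))) \<le> ereal (2 * c / a)"
proof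
  let ?K = "(2 * c / a)\<^sup>2"
  have bound: "y t \<le> ?K + (y 0 - ?K) * exp (- (a / 2) * t)" if "0 \<le> t" for t
    using sqrt_forced_differential_inequality_exp_bound[OF \<open>0 < a\<close> y_deriv y'_le y_nonneg that] .
  have "y t \<le> ?K + \<bar>y 0 - ?K\<bar>" if "0 \<le> t" for t
    using bound[OF that] mult_le_abs_mult_bound[of "exp (- (a / 2) * t)" 1 "y 0 - ?K"] \<open>0 < a\<close> that
    by simp
  then show "\<exists>B. \<forall>t\<ge>0. y t \<le> B" by blast
  show "Limsup at_top (\<lambda>t. ereal (sqrt (y t))) \<le> ereal (2 * c / a)"
    using Limsup_sqrt_le_of_exp_decay_bound[of "a / 2" y, OF _ bound] \<open>0 < a\<close> \<open>0 \<le> c\<close> by simp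
qed

theorem theorem2:
  fixes rho rhox :: "real \<Rightarrow> real \<Rightarrow> real"
    and d dx :: "real \<Rightarrow> real \<Rightarrow> real"
    and e ex et :: "real \<Rightarrow> real \<Rightarrow> real"
    and M L D1 D2 Kp kappa :: real
  assumes rho_nonneg: "\<forall>x\<in>S. \<forall>t\<ge>0. rho x t \<ge> 0"
    and rho_cont: "continuous_on (S \<times> {0..}) (\<lambda>(x, t). rho x t)"
    and rho_x: "\<forall>x\<in>S. \<forall>t\<ge>0. ((\<lambda>y. rho y t) has_real_derivative rhox x t) (at x within S)"
    and rhox_cont: "continuous_on (S \<times> {0..}) (\<lambda>(x, t). rhox x t)"
    and rho_per: "\<forall>t\<ge>0. rho (-pi) t = rho pi t \<and> rhox (-pi) t = rhox pi t"
    and rho_L2: "\<forall>t\<ge>0. L2norm (\<lambda>x. rho x t) \<le> M"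
    and rhox_L2: "\<forall>t\<ge>0. L2norm (\<lambda>x. rhox x t) \<le> L"
    and d_per: "\<forall>t\<ge>0. d (-pi) t = d pi t"
    and d_x: "\<forall>x\<in>S. \<forall>t\<ge>0. ((\<lambda>y. d y t) has_real_derivative dx x t) (at x within S)"
    and d_bound: "\<forall>x\<in>S. \<forall>t\<ge>0. \<bar>d x t\<bar> \<le> D1"
    and dx_bound: "\<forall>x\<in>S. \<forall>t\<ge>0. \<bar>dx x t\<bar> \<le> D2"
    and D1_pos: "D1 > 0" and D2_pos: "D2 > 0"
    and Kp_pos: "Kp > 0"
    and e_cont: "continuous_on (S \<times> {0..}) (\<lambda>(x, t). e x t)"
    and e_x: "\<forall>x\<in>S. \<forall>t\<ge>0. ((\<lambda>y. e y t) has_real_derivative ex x t) (at x within S)"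
    and ex_cont: "continuous_on (S \<times> {0..}) (\<lambda>(x, t). ex x t)"
    and e_t: "\<forall>x\<in>S. \<forall>t\<ge>0. ((\<lambda>s. e x s) has_real_derivative et x t) (at t within {0..})"
    and et_cont: "continuous_on (S \<times> {0..}) (\<lambda>(x, t). et x t)"
    and e_per: "\<forall>t\<ge>0. e (-pi) t = e pi t"
    and pde: "\<forall>x\<in>S. \<forall>t\<ge>0.
       ((\<lambda>y. (rho y t - e y t) * d y t) has_real_derivative (et x t + Kp * e x t)) (at x within S)"
    and kappa_gt: "D2 < kappa"
    and Kp_kappa: "2 * Kp > kappa"
  shows "(\<exists>B. \<forall>t\<ge>0. (L2norm (\<lambda>x. e x t))\<^sup>2 \<le> B)
    \<and> Limsup at_top (\<lambda>t. ereal (L2norm (\<lambda>x. e x t)))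
        \<le> ereal ((2 * L * D1 + 2 * M * D2) / (kappa - D2))"
proof -
  define y where "y t = (L2norm (\<lambda>x. e x t))\<^sup>2" for t
  define a where "a = 2 * Kp - D2"
  define c where "c = L * D1 + M * D2"
  have "0 < a" using kappa_gt Kp_kappa by (simp add: a_def)
  have "0 \<le> c"
    using L2norm_nonneg[of "\<lambda>x. rhox x 0"] L2norm_nonneg[of "\<lambda>x. rho x 0"] rhox_L2 rho_L2 D1_pos D2_pos
    by (auto simp: c_def intro!: add_nonneg_nonneg mult_nonneg_nonneg)
  have y_deriv: "(y has_real_derivative integral S (\<lambda>x. 2 * e x t * et x t)) (at t within {0..})"
    if "0 \<le> t" for t
    using has_real_derivative_integral_power2[of "-pi" pi "{0..}" e et t] e_t e_cont et_cont that
    by (simp add: y_def[abs_def] power2_L2norm S_def convex_real_interval)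
  have y_deriv_le: "integral S (\<lambda>x. 2 * e x t * et x t) \<le> - a * y t + 2 * c * sqrt (y t)"
    if "0 \<le> t" for t
  proof -
    have "integral S (\<lambda>x. 2 * e x t * et x t) \<le> - a * y t
        + 2 * (D1 * L2norm (\<lambda>x. rhox x t) + D2 * L2norm (\<lambda>x. rho x t)) * L2norm (\<lambda>x. e x t)"
      unfolding y_def a_def
      by (rule error_energy_inequality[where ex = "\<lambda>x. ex x t" and rx = "\<lambda>x. rhox x t"
            and d = "\<lambda>x. d x t" and dx = "\<lambda>x. dx x t" and k = Kp])
        (use that e_x rho_x d_x pde e_per d_per d_bound dx_bound
          continuous_on_section[OF et_cont] continuous_on_section[OF rhox_cont] in auto)
    also have "\<dots> \<le> - a * y t + 2 * c * sqrt (y t)"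
      using that rhox_L2 rho_L2 D1_pos D2_pos L2norm_nonneg[of "\<lambda>x. e x t"]
      by (auto simp: y_def c_def intro!: mult_right_mono add_mono)
    finally show ?thesis .
  qed
  have "(\<exists>B. \<forall>t\<ge>0. y t \<le> B) \<and> Limsup at_top (\<lambda>t. ereal (sqrt (y t))) \<le> ereal (2 * c / a)"
    using sqrt_forced_differential_inequality_bounded_Limsup[OF \<open>0 < a\<close> \<open>0 \<le> c\<close> y_deriv y_deriv_le]
    by (simp add: y_def)
  moreover have "2 * c / a \<le> 2 * c / (kappa - D2)"
    using \<open>0 \<le> c\<close> kappa_gt Kp_kappa by (simp add: divide_left_mono a_def)
  moreover have "2 * c = 2 * L * D1 + 2 * M * D2" by (simp add: c_def algebra_simps)
  ultimately show ?thesis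
    by (auto simp: y_def L2norm_nonneg intro: order_trans)
qed

end
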